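(* Let $f:\mathrm{I}\to\mathbb{R}$ be a convex function on an interval $\mathrm{I}\subseteq\mathbb{R}$, let $\Gamma\subseteq\mathcal{M}_b(\mathcal{H})$, and let $\P\in\mathcal{P}(\mathcal{H})$ be a fixed distribution (not depending on the sample). Let $\delta\in[0,1]$ and, for every sample $\mathcal{S}\in\mathcal{Z}^m$, let $\phi_{\mathcal{S}}\in\Gamma$. Then with probability at least $1-\delta$ over $\mathcal{S}\sim\mathcal{D}^m$, for all $\rho\in\mathcal{P}(\mathcal{H})$, \[ \mathbb{E}_{h\sim\rho}\phi_{\mathcal{S}}(h)\le D^{\Gamma}_{f}(\rho\|\P)+\ln\frac{1}{\delta}+\ln\Big[\mathbb{E}_{\mathcal{S}\sim\mathcal{D}^m}\exp\big(\Lambda^{\P}_{f}(\phi_{\mathcal{S}})\big)\Big]. \]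
   Context: $\mathcal{H}$ is a hypothesis space, $\mathcal{Z}$ a data space, $\mathcal{D}$ an unknown distribution on $\mathcal{Z}$, and $\mathcal{S}=\{z_1,\dots,z_m\}\sim\mathcal{D}^m$ an i.i.d. sample. $\mathcal{P}(\mathcal{H})$ is the set of probability distributions on $\mathcal{H}$ and $\mathcal{M}_b(\mathcal{H})$ the set of bounded measurable functions $\mathcal{H}\to\mathbb{R}$. $f^*(y)=\sup_{x\in\mathrm{I}}\{xy-f(x)\}$ is the Legendre transform of $f$. For $\varphi\in\mathcal{M}_b(\mathcal{H})$, $\Lambda^{\P}_{f}(\varphi):=\inf_{c\in\mathbb{R}}\{c+\mathbb{E}_{h\sim\P}f^*(\varphi(h)-c)\}$. The $(f,\Gamma)$-divergence is $D^{\Gamma}_f(\rho\|\P):=\sup_{\varphi\in\Gamma}\{\mathbb{E}_{h\sim\rho}\varphi(h)-\Lambda^{\P}_f(\varphi)\}$. *)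

theory Defs
  imports "HOL-Probability.Probability"
begin

definition legendre :: "(real \<Rightarrow> real) \<Rightarrow> real set \<Rightarrow> real \<Rightarrow> ereal" where
  "legendre f I y = (SUP x\<in>I. ereal (x * y - f x))"

definition eexpect :: "'a measure \<Rightarrow> ('a \<Rightarrow> ereal) \<Rightarrow> ereal" where
  "eexpect M X = enn2ereal (\<integral>\<^sup>+ x. e2ennreal (X x) \<partial>M) - enn2ereal (\<integral>\<^sup>+ x. e2ennreal (- X x) \<partial>M)"

definition bounded_measurable :: "'h measure \<Rightarrow> ('h \<Rightarrow> real) set" where
  "bounded_measurable M = {\<phi>. \<phi> \<in> borel_measurable M \<and> (\<exists>B. \<forall>h\<in>space M. \<bar>\<phi> h\<bar> \<le> B)}"

definition Lambda_f :: "(real \<Rightarrow> real) \<Rightarrow> real set \<Rightarrow> 'h measure \<Rightarrow> ('h \<Rightarrow> real) \<Rightarrow> ereal" where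
  "Lambda_f f I P \<phi> = (INF c\<in>UNIV. ereal c + eexpect P (\<lambda>h. legendre f I (\<phi> h - c)))"

definition fGamma_div :: "(real \<Rightarrow> real) \<Rightarrow> real set \<Rightarrow> ('h \<Rightarrow> real) set \<Rightarrow> 'h measure \<Rightarrow> 'h measure \<Rightarrow> ereal" where
  "fGamma_div f I \<Gamma> \<rho> P = (SUP \<phi>\<in>\<Gamma>. ereal (\<integral>h. \<phi> h \<partial>\<rho>) - Lambda_f f I P \<phi>)"

definition eln :: "ereal \<Rightarrow> ereal" where
  "eln x = (if x \<le> 0 then - \<infinity> else if x = \<infinity> then \<infinity> else ereal (ln (real_of_ereal x)))"

definition eexp :: "ereal \<Rightarrow> ennreal" where
  "eexp x = (if x = \<infinity> then \<infinity> else if x = - \<infinity> then 0 else ennreal (exp (real_of_ereal x)))"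

end

theory Submission imports Defs begin

(* The bound is a Chernoff-type tail estimate combined with the variational inequality behind
   the (f,Gamma)-divergence. For phi in Gamma and every rho, the definition of the divergence as a
   supremum gives  E_rho phi <= D(rho||P) + Lambda(phi).  Because P is fixed in advance,
   S |-> Lambda(phi_S) is a single random variable, and Markov's inequality applied to its
   exponential shows that it exceeds ln(1/delta) + ln E exp(Lambda(phi_S)) with probability at
   most delta. *)

lemma borel_measurable_eexp [measurable]: "eexp \<in> borel_measurable borel"
  unfolding eexp_def by measurable

lemma eexp_ereal [simp]: "eexp (ereal r) = ennreal (exp r)"
  by (simp add: eexp_def)

lemma eexp_eq_0_iff: "eexp a = 0 \<longleftrightarrow> a = -\<infinity>"
  by (cases a) (auto simp: eexp_def)

lemma eexp_mono: "a \<le> b \<Longrightarrow> eexp a \<le> eexp b"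
  by (cases a; cases b) (auto simp: eexp_def intro: ennreal_leI)

lemma eln_ereal: "0 < r \<Longrightarrow> eln (ereal r) = ereal (ln r)"
  by (simp add: eln_def)

lemma emeasure_gt_log_moment_le:
  assumes [measurable]: "L \<in> borel_measurable M" and "0 \<le> \<delta>"
  defines "Z \<equiv> \<integral>\<^sup>+ x. eexp (L x) \<partial>M"
  shows "emeasure M {x\<in>space M. - eln (ereal \<delta>) + eln (enn2ereal Z) < L x} \<le> ennreal \<delta>"
    (is "emeasure M {x\<in>space M. ?t < L x} \<le> _")
proof -
  consider "\<delta> = 0 \<or> Z = \<top>" | "Z = 0" | z where "0 < \<delta>" "Z = ennreal z" "0 < z"
    using \<open>0 \<le> \<delta>\<close> by (cases Z; cases "\<delta> = 0") (auto simp: less_le)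
  then show ?thesis
  proof cases
    case 1
    then have t: "?t = \<infinity>" by (auto simp: eln_def)
    show ?thesis unfolding t by simp
  next
    case 2
    then have "AE x in M. eexp (L x) = 0"
      unfolding Z_def by (subst (asm) nn_integral_0_iff_AE) auto
    then have "AE x in M. \<not> ?t < L x"
      by eventually_elim (simp add: eexp_eq_0_iff)
    then have "emeasure M {x\<in>space M. ?t < L x} = 0"
      by (subst (asm) AE_iff_measurable[OF _ refl]) auto
    then show ?thesis by simp
  next
    case 3
    have "exp (ln z - ln \<delta>) = z / \<delta>"
      using 3 by (simp add: exp_diff)
    with 3 have exp_t: "eexp ?t = ennreal (z / \<delta>)"
      by (simp add: eln_ereal enn2ereal_ennreal)
    have "{x\<in>space M. ?t < L x} \<subseteq> {x\<in>space M. 1 \<le> ennreal (\<delta> / z) * eexp (L x)}"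
    proof safe
      fix x assume "?t < L x"
      then have "eexp ?t \<le> eexp (L x)"
        by (intro eexp_mono less_imp_le)
      then have "ennreal (z / \<delta>) \<le> eexp (L x)"
        unfolding exp_t .
      then have "ennreal (\<delta> / z) * ennreal (z / \<delta>) \<le> ennreal (\<delta> / z) * eexp (L x)"
        by (rule mult_left_mono) simp
      then show "1 \<le> ennreal (\<delta> / z) * eexp (L x)"
        using 3 by (simp flip: ennreal_mult)
    qed
    then have "emeasure M {x\<in>space M. ?t < L x}
        \<le> ennreal (\<delta> / z) * (\<integral>\<^sup>+ x. eexp (L x) * indicator (space M) x \<partial>M)"
      by (intro order_trans[OF emeasure_mono nn_integral_Markov_inequality]) measurable
    also have "\<dots> = ennreal (\<delta> / z) * Z"
      unfolding Z_def by (auto intro!: nn_integral_cong)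
    also have "\<dots> = ennreal \<delta>"
      using 3 by (simp flip: ennreal_mult)
    finally show ?thesis .
  qed
qed

lemma integral_le_fGamma_div_plus_Lambda_f:
  assumes "\<phi> \<in> \<Gamma>"
  shows "ereal (\<integral>h. \<phi> h \<partial>\<rho>) \<le> fGamma_div f I \<Gamma> \<rho> P + Lambda_f f I P \<phi>"
proof -
  have "ereal (\<integral>h. \<phi> h \<partial>\<rho>) - Lambda_f f I P \<phi> \<le> fGamma_div f I \<Gamma> \<rho> P"
    unfolding fGamma_div_def using assms by (rule SUP_upper)
  then show ?thesis
    by (cases "Lambda_f f I P \<phi>"; cases "fGamma_div f I \<Gamma> \<rho> P") auto
qed

theorem theorem3p1:
  fixes f :: "real \<Rightarrow> real" and I :: "real set"
    and \<Gamma> :: "('h \<Rightarrow> real) set" and P :: "'h measure"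
    and D :: "'z measure" and m :: nat and \<delta> :: real
    and \<phi> :: "(nat \<Rightarrow> 'z) \<Rightarrow> 'h \<Rightarrow> real"
  assumes "is_interval I" and "convex_on I f"
    and "\<Gamma> \<subseteq> bounded_measurable P"
    and "prob_space P"
    and "prob_space D"
    and "0 \<le> \<delta>" and "\<delta> \<le> 1"
    and "\<forall>S\<in>space (PiM {..<m} (\<lambda>_. D)). \<phi> S \<in> \<Gamma>"
    and "(\<lambda>S. Lambda_f f I P (\<phi> S)) \<in> borel_measurable (PiM {..<m} (\<lambda>_. D))"
  shows "\<exists>A\<in>sets (PiM {..<m} (\<lambda>_. D)).
           measure (PiM {..<m} (\<lambda>_. D)) A \<ge> 1 - \<delta> \<and>
           (\<forall>S\<in>A. \<forall>\<rho>. prob_space \<rho> \<and> sets \<rho> = sets P \<longrightarrow>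
              ereal (\<integral>h. \<phi> S h \<partial>\<rho>)
                \<le> fGamma_div f I \<Gamma> \<rho> P + (- eln (ereal \<delta>))
                   + eln (enn2ereal (\<integral>\<^sup>+ S'. eexp (Lambda_f f I P (\<phi> S')) \<partial>(PiM {..<m} (\<lambda>_. D)))))"
proof -
  define M where "M = PiM {..<m} (\<lambda>_. D)"
  define L where "L S = Lambda_f f I P (\<phi> S)" for S
  define t where "t = - eln (ereal \<delta>) + eln (enn2ereal (\<integral>\<^sup>+ S. eexp (L S) \<partial>M))"
  define A where "A = {S\<in>space M. L S \<le> t}"
  interpret M: prob_space M
    unfolding M_def by (intro prob_space_PiM \<open>prob_space D\<close>)
  have [measurable]: "L \<in> borel_measurable M"
    using assms(9) unfolding L_def M_def .
  have A_sets: "A \<in> sets M"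
    unfolding A_def by measurable
  have "space M - A = {S\<in>space M. t < L S}"
    unfolding A_def by auto
  then have "emeasure M (space M - A) \<le> ennreal \<delta>"
    using emeasure_gt_log_moment_le[of L M \<delta>] \<open>0 \<le> \<delta>\<close> unfolding t_def by simp
  then have "measure M A \<ge> 1 - \<delta>"
    using M.prob_compl[OF A_sets] \<open>0 \<le> \<delta>\<close> by (simp add: M.emeasure_eq_measure)
  moreover have "ereal (\<integral>h. \<phi> S h \<partial>\<rho>) \<le> fGamma_div f I \<Gamma> \<rho> P + t"
    if "S \<in> A" for S and \<rho> :: "'h measure"
  proof -
    have "\<phi> S \<in> \<Gamma>"
      using that assms(8) unfolding A_def M_def by auto
    then have "ereal (\<integral>h. \<phi> S h \<partial>\<rho>) \<le> fGamma_div f I \<Gamma> \<rho> P + L S"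
      unfolding L_def by (rule integral_le_fGamma_div_plus_Lambda_f)
    also have "\<dots> \<le> fGamma_div f I \<Gamma> \<rho> P + t"
      using that unfolding A_def by (auto intro: add_left_mono)
    finally show ?thesis .
  qed
  ultimately show ?thesis
    using A_sets unfolding M_def L_def t_def by (auto simp: add.assoc)
qed

end
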